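(* In the setting of the context, define the operators on $\mathbb{C}^{2^n}$ $$\hat A:=\sum_{j=0}^{2^n-1}\sum_{q=0}^{2^n-1}\langle\phi_q|\chi_j\rangle\,e^{-i\theta_j}\,|q\rangle\langle j|,$$ $$\hat A':=\sum_{c_1=0}^{d-1}\sum_{c_2=0}^{d-1}\ \sum_{j:(0,j)\in V(G^{(c_1,c_2)})}\ \frac{1}{2^B}\sum_{b=0}^{2^B-1} g(j,c_1,b)\,e^{i\arg\langle\phi_{f(0,j,c_1)}|\chi_j\rangle-i\theta_j}\,|f(0,j,c_1)\rangle\langle j|,$$ where $g(j,c_1,b)=1$ if $b<k_{j,f(0,j,c_1)}$ and $g(j,c_1,b)=(-1)^b$ otherwise. Then $$\|\hat A'-\hat A\|\le\frac{2d^2}{2^B},$$ where $\|\cdot\|$ is the spectral norm.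
   Context: $n,d,B$ are positive integers. $\{|\chi_j\rangle\}_{j=0}^{2^n-1}$ and $\{|\phi_q\rangle\}_{q=0}^{2^n-1}$ are orthonormal bases of $\mathbb{C}^{2^n}$, $\{|j\rangle\}$ denotes the computational basis, and $\theta_j\in\mathbb{R}$ are arbitrary phases. $d$-sparsity: for every $j$ at most $d$ indices $q$ have $\langle\phi_q|\chi_j\rangle\ne0$, and for every $q$ at most $d$ indices $j$ have $\langle\phi_q|\chi_j\rangle\ne0$. Padded index function $f$: for fixed $j$, list all $q$ with $\langle\phi_q|\chi_j\rangle\ne0$ in increasing order, padded by further distinct indices to exactly $d$ distinct entries, and let $f(0,j,p)$ be the $p$-th entry ($p=0,\dots,d-1$); symmetrically $f(1,q,p)$ is the $p$-th entry of the padded increasing list of $j$ with $\langle\phi_q|\chi_j\rangle\ne0$. Graph $G$: bipartite with vertices $\{0,1\}\times\{0,\dots,2^n-1\}$ and edges $((0,j),(1,q))$ whenever $\langle\phi_q|\chi_j\rangle\ne0$; the edge $((0,j),(1,q))$ has colour $(c_1,c_2)$ where $f(0,j,c_1)=q$ and $f(1,q,c_2)=j$. $G^{(c_1,c_2)}$ is the subgraph formed by edges of colour $(c_1,c_2)$, and $V(G^{(c_1,c_2)})$ is the set of vertices incident to such edges. $\arg$ of a nonzero complex number is its argument. For each pair $(j,q)$, $k_{j,q}\in\{0,1,\dots,2^B\}$ is a $B$-bit rounding of $2^B|\langle\phi_q|\chi_j\rangle|$, i.e. an integer with $\bigl|2^B|\langle\phi_q|\chi_j\rangle|-k_{j,q}\bigr|\le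 1$. *)

theory Defs
  imports "HOL-Analysis.Analysis"
begin

text \<open>Vectors of C^N are represented as functions nat => complex, only indices < N
  being relevant; a family of vectors is nat => nat => complex (vector index, component).
  Operators on C^N are matrices nat => nat => complex (row, column), indices < N.\<close>

definition braket :: "nat \<Rightarrow> (nat \<Rightarrow> complex) \<Rightarrow> (nat \<Rightarrow> complex) \<Rightarrow> complex" where
  "braket N a b = (\<Sum>k<N. cnj (a k) * b k)"

definition orthonormal_basis :: "nat \<Rightarrow> (nat \<Rightarrow> nat \<Rightarrow> complex) \<Rightarrow> bool" where
  "orthonormal_basis N v \<longleftrightarrow>
     (\<forall>i<N. \<forall>j<N. braket N (v i) (v j) = (if i = j then 1 else 0))"

definition overlap :: "nat \<Rightarrow> (nat \<Rightarrow> nat \<Rightarrow> complex) \<Rightarrow> (nat \<Rightarrow> nat \<Rightarrow> complex) \<Rightarrow> nat \<Rightarrow> nat \<Rightarrow> complex" where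
  "overlap N phi chi q j = braket N (phi q) (chi j)"

definition d_sparse :: "nat \<Rightarrow> nat \<Rightarrow> (nat \<Rightarrow> nat \<Rightarrow> complex) \<Rightarrow> (nat \<Rightarrow> nat \<Rightarrow> complex) \<Rightarrow> bool" where
  "d_sparse N d phi chi \<longleftrightarrow>
     (\<forall>j<N. card {q. q < N \<and> overlap N phi chi q j \<noteq> 0} \<le> d) \<and>
     (\<forall>q<N. card {j. j < N \<and> overlap N phi chi q j \<noteq> 0} \<le> d)"

definition padded_index :: "nat \<Rightarrow> nat \<Rightarrow> (nat \<Rightarrow> nat \<Rightarrow> complex) \<Rightarrow> (nat \<Rightarrow> nat \<Rightarrow> complex)
    \<Rightarrow> (nat \<Rightarrow> nat \<Rightarrow> nat \<Rightarrow> nat) \<Rightarrow> bool" where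
  "padded_index N d phi chi f \<longleftrightarrow>
     (\<forall>j<N. let S = {q. q < N \<and> overlap N phi chi q j \<noteq> 0};
               L = map (f 0 j) [0..<d]
           in distinct L \<and> take (card S) L = sorted_list_of_set S) \<and>
     (\<forall>q<N. let S = {j. j < N \<and> overlap N phi chi q j \<noteq> 0};
               L = map (f 1 q) [0..<d]
           in distinct L \<and> take (card S) L = sorted_list_of_set S)"

text \<open>(0,j) is in V(G^(c1,c2)): some edge ((0,j),(1,q)) of colour (c1,c2) exists.\<close>
definition in_V0 :: "nat \<Rightarrow> (nat \<Rightarrow> nat \<Rightarrow> complex) \<Rightarrow> (nat \<Rightarrow> nat \<Rightarrow> complex)
    \<Rightarrow> (nat \<Rightarrow> nat \<Rightarrow> nat \<Rightarrow> nat) \<Rightarrow> nat \<Rightarrow> nat \<Rightarrow> nat \<Rightarrow> bool" where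
  "in_V0 N phi chi f c1 c2 j \<longleftrightarrow>
     (\<exists>q<N. overlap N phi chi q j \<noteq> 0 \<and> f 0 j c1 = q \<and> f 1 q c2 = j)"

definition ketbra :: "nat \<Rightarrow> nat \<Rightarrow> nat \<Rightarrow> nat \<Rightarrow> complex" where
  "ketbra a b = (\<lambda>r c. if r = a \<and> c = b then 1 else 0)"

definition A_hat :: "nat \<Rightarrow> (nat \<Rightarrow> nat \<Rightarrow> complex) \<Rightarrow> (nat \<Rightarrow> nat \<Rightarrow> complex) \<Rightarrow> (nat \<Rightarrow> real)
    \<Rightarrow> nat \<Rightarrow> nat \<Rightarrow> complex" where
  "A_hat N phi chi theta = (\<lambda>r c. \<Sum>j<N. \<Sum>q<N.
      overlap N phi chi q j * exp (- \<i> * complex_of_real (theta j)) * ketbra q j r c)"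

definition g_fun :: "(nat \<Rightarrow> nat \<Rightarrow> nat) \<Rightarrow> (nat \<Rightarrow> nat \<Rightarrow> nat \<Rightarrow> nat) \<Rightarrow> nat \<Rightarrow> nat \<Rightarrow> nat \<Rightarrow> complex" where
  "g_fun k f j c1 b = (if b < k j (f 0 j c1) then 1 else (-1) ^ b)"

definition A_prime :: "nat \<Rightarrow> nat \<Rightarrow> nat \<Rightarrow> (nat \<Rightarrow> nat \<Rightarrow> complex) \<Rightarrow> (nat \<Rightarrow> nat \<Rightarrow> complex)
    \<Rightarrow> (nat \<Rightarrow> real) \<Rightarrow> (nat \<Rightarrow> nat \<Rightarrow> nat \<Rightarrow> nat) \<Rightarrow> (nat \<Rightarrow> nat \<Rightarrow> nat) \<Rightarrow> nat \<Rightarrow> nat \<Rightarrow> complex" where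
  "A_prime N d B phi chi theta f k = (\<lambda>r c.
     \<Sum>c1<d. \<Sum>c2<d. \<Sum>j\<in>{j. j < N \<and> in_V0 N phi chi f c1 c2 j}.
       (1 / 2 ^ B) * (\<Sum>b<2 ^ B. g_fun k f j c1 b)
       * exp (\<i> * complex_of_real (Arg (overlap N phi chi (f 0 j c1) j)) - \<i> * complex_of_real (theta j))
       * ketbra (f 0 j c1) j r c)"

definition spec_norm :: "nat \<Rightarrow> (nat \<Rightarrow> nat \<Rightarrow> complex) \<Rightarrow> real" where
  "spec_norm N M = Sup {sqrt (\<Sum>r<N. (cmod (\<Sum>c<N. M r c * v c))\<^sup>2) | v.
                          (\<Sum>c<N. (cmod (v c))\<^sup>2) \<le> 1}"

end

theory Submission
  imports Defs
begin

text \<open>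
  Thanks to the edge colouring, every nonzero entry \<open>(q, j)\<close> of \<open>A\<close> is produced by exactly
  one term of \<open>A'\<close>, and nothing else contributes. In that term the alternating tail of the
  average over \<open>b\<close> cancels up to parity, so \<open>|\<langle>\<phi>\<^sub>q|\<chi>\<^sub>j\<rangle>|\<close> is replaced by
  \<open>(k - k mod 2) / 2\<^sup>B\<close> while the phase is kept exactly. Hence \<open>A' - A\<close> has entries of modulus
  at most \<open>2 / 2\<^sup>B\<close>, supported on the \<open>d\<close>-sparse overlap pattern, and the Schur test bounds its
  spectral norm by \<open>2d / 2\<^sup>B \<le> 2d\<^sup>2 / 2\<^sup>B\<close>.
\<close>

lemma spec_norm_le:
  assumes "0 \<le> C"
    and "\<And>v. (\<Sum>c<N. (cmod (v c))\<^sup>2) \<le> 1 \<Longrightarrow> (\<Sum>r<N. (cmod (\<Sum>c<N. M r c * v c))\<^sup>2) \<le> C\<^sup>2"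
  shows "spec_norm N M \<le> C"
  unfolding spec_norm_def
proof (rule cSup_least)
  show "{sqrt (\<Sum>r<N. (cmod (\<Sum>c<N. M r c * v c))\<^sup>2) | v. (\<Sum>c<N. (cmod (v c))\<^sup>2) \<le> 1} \<noteq> {}"
    by (auto intro!: exI[of _ "\<lambda>_. 0"])
next
  fix x assume "x \<in> {sqrt (\<Sum>r<N. (cmod (\<Sum>c<N. M r c * v c))\<^sup>2) | v. (\<Sum>c<N. (cmod (v c))\<^sup>2) \<le> 1}"
  then obtain v where x: "x = sqrt (\<Sum>r<N. (cmod (\<Sum>c<N. M r c * v c))\<^sup>2)"
    and v: "(\<Sum>c<N. (cmod (v c))\<^sup>2) \<le> 1" by blast
  have "x \<le> sqrt (C\<^sup>2)" unfolding x by (intro real_sqrt_le_mono assms(2) v)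
  then show "x \<le> C" using assms(1) by simp
qed

lemma norm_sum_sparse_squared_le:
  fixes a v :: "'i \<Rightarrow> complex"
  assumes "finite A" "S \<subseteq> A" "\<forall>c\<in>A - S. a c = 0"
    and "\<forall>c\<in>S. cmod (a c) \<le> \<epsilon>" "card S \<le> d"
  shows "(cmod (\<Sum>c\<in>A. a c * v c))\<^sup>2 \<le> \<epsilon>\<^sup>2 * d * (\<Sum>c\<in>S. (cmod (v c))\<^sup>2)"
proof -
  have "cmod (\<Sum>c\<in>A. a c * v c) = cmod (\<Sum>c\<in>S. a c * v c)"
    using assms(1-3) by (simp add: sum.mono_neutral_right)
  also have "\<dots> \<le> (\<Sum>c\<in>S. \<epsilon> * cmod (v c))"
    by (rule order_trans[OF norm_sum sum_mono])
      (use assms(4) in \<open>auto simp: norm_mult mult_right_mono\<close>)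
  finally have "(cmod (\<Sum>c\<in>A. a c * v c))\<^sup>2 \<le> (\<Sum>c\<in>S. \<epsilon> * cmod (v c))\<^sup>2"
    by (simp add: power_mono)
  also have "\<dots> \<le> (\<Sum>c\<in>S. (\<epsilon> * cmod (v c))\<^sup>2) * card S"
    by (rule sum_squared_le_sum_of_squares)
  also have "\<dots> \<le> (\<Sum>c\<in>S. (\<epsilon> * cmod (v c))\<^sup>2) * d"
    using assms(5) by (intro mult_left_mono) (auto intro: sum_nonneg)
  also have "\<dots> = \<epsilon>\<^sup>2 * d * (\<Sum>c\<in>S. (cmod (v c))\<^sup>2)"
    by (simp add: power_mult_distrib sum_distrib_left mult_ac)
  finally show ?thesis .
qed

lemma spec_norm_le_sparse:
  fixes M :: "nat \<Rightarrow> nat \<Rightarrow> complex"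
  assumes "0 \<le> \<epsilon>"
    and support: "\<And>r c. r < N \<Longrightarrow> c < N \<Longrightarrow> M r c \<noteq> 0 \<Longrightarrow> P r c"
    and entry: "\<And>r c. r < N \<Longrightarrow> c < N \<Longrightarrow> cmod (M r c) \<le> \<epsilon>"
    and rows: "\<And>r. r < N \<Longrightarrow> card {c. c < N \<and> P r c} \<le> d"
    and cols: "\<And>c. c < N \<Longrightarrow> card {r. r < N \<and> P r c} \<le> d"
  shows "spec_norm N M \<le> \<epsilon> * d"
proof (rule spec_norm_le)
  fix v :: "nat \<Rightarrow> complex" assume v: "(\<Sum>c<N. (cmod (v c))\<^sup>2) \<le> 1"
  let ?w = "\<lambda>c. (cmod (v c))\<^sup>2"
  have filter: "(\<Sum>c\<in>{c. c < N \<and> Q c}. g c) = (\<Sum>c<N. if Q c then g c else 0)"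
    for Q and g :: "nat \<Rightarrow> real"
    using sum.inter_filter[of "{..<N}" g Q] by simp
  have "(\<Sum>r<N. (cmod (\<Sum>c<N. M r c * v c))\<^sup>2) \<le> (\<Sum>r<N. \<epsilon>\<^sup>2 * d * (\<Sum>c\<in>{c. c < N \<and> P r c}. ?w c))"
    by (intro sum_mono norm_sum_sparse_squared_le) (use support entry rows in auto)
  also have "\<dots> = \<epsilon>\<^sup>2 * d * (\<Sum>r<N. \<Sum>c<N. if P r c then ?w c else 0)"
    by (simp add: sum_distrib_left filter)
  also have "\<dots> = \<epsilon>\<^sup>2 * d * (\<Sum>c<N. \<Sum>r<N. if P r c then ?w c else 0)"
    by (subst sum.swap) (rule refl)
  also have "\<dots> = \<epsilon>\<^sup>2 * d * (\<Sum>c<N. card {r. r < N \<and> P r c} * ?w c)"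
    by (simp flip: filter)
  also have "\<dots> \<le> \<epsilon>\<^sup>2 * d * (\<Sum>c<N. d * ?w c)"
    by (intro mult_left_mono sum_mono) (use cols in \<open>auto intro: mult_right_mono\<close>)
  also have "\<dots> \<le> \<epsilon>\<^sup>2 * d * d"
    using v by (intro mult_left_mono) (auto simp: sum_distrib_left[symmetric] mult_left_le)
  finally show "(\<Sum>r<N. (cmod (\<Sum>c<N. M r c * v c))\<^sup>2) \<le> (\<epsilon> * d)\<^sup>2"
    by (simp add: power2_eq_square mult_ac)
qed (use assms(1) in simp)

lemma sum_neg_one_power_lessThan: "(\<Sum>b<K. (-1) ^ b :: 'a::ring_1) = of_nat (K mod 2)"
proof (induction K)
  case (Suc K)
  then show ?case
    by (cases "even K") (simp_all add: odd_iff_mod_2_eq_one even_iff_mod_2_eq_zero mod_Suc)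
qed simp

lemma sum_truncated_alternating:
  assumes "K \<le> m" "even m"
  shows "(\<Sum>b<m. if b < K then 1 else (-1) ^ b :: 'a::ring_1) = of_nat (K - K mod 2)"
proof -
  have split: "{..<m} = {..<K} \<union> {K..<m}" and disj: "{..<K} \<inter> {K..<m} = {}"
    using assms(1) by auto
  have "(\<Sum>b<m. (-1) ^ b :: 'a) = 0"
    using assms(2) by (simp add: sum_neg_one_power_lessThan even_iff_mod_2_eq_zero)
  then have tail: "(\<Sum>b\<in>{K..<m}. (-1) ^ b :: 'a) = - of_nat (K mod 2)"
    unfolding split
    by (simp add: sum.union_disjoint disj sum_neg_one_power_lessThan eq_neg_iff_add_eq_0 add.commute)
  have "(\<Sum>b<m. if b < K then 1 else (-1) ^ b :: 'a) = of_nat K + (\<Sum>b\<in>{K..<m}. (-1) ^ b)"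
    unfolding split by (simp add: sum.union_disjoint disj)
  then show ?thesis
    by (simp add: tail of_nat_diff)
qed

lemma distinct_prefix_unique_index:
  assumes "distinct (map p [0..<d])" "take m (map p [0..<d]) = sorted_list_of_set S"
    and "finite S" "x \<in> S"
  shows "\<exists>!i. i < d \<and> p i = x"
proof -
  have "x \<in> set (map p [0..<d])"
    using assms(2-4) by (metis in_set_takeD set_sorted_list_of_set)
  then obtain i where "i < d" "p i = x" by auto
  moreover have "inj_on p {..<d}"
    using assms(1) by (simp add: distinct_map atLeast0LessThan)
  ultimately show ?thesis unfolding inj_on_def by blast
qed

lemma padded_index_unique_colours:
  assumes "padded_index N d phi chi f" "q < N" "j < N" "overlap N phi chi q j \<noteq> 0"
  shows "\<exists>!c1. c1 < d \<and> f 0 j c1 = q" and "\<exists>!c2. c2 < d \<and> f 1 q c2 = j"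
proof -
  have row: "distinct (map (f 0 j) [0..<d]) \<and> take (card {q. q < N \<and> overlap N phi chi q j \<noteq> 0})
      (map (f 0 j) [0..<d]) = sorted_list_of_set {q. q < N \<and> overlap N phi chi q j \<noteq> 0}"
    and col: "distinct (map (f 1 q) [0..<d]) \<and> take (card {j. j < N \<and> overlap N phi chi q j \<noteq> 0})
      (map (f 1 q) [0..<d]) = sorted_list_of_set {j. j < N \<and> overlap N phi chi q j \<noteq> 0}"
    using assms(1-3) unfolding padded_index_def Let_def by blast+
  show "\<exists>!c1. c1 < d \<and> f 0 j c1 = q"
    using row assms(2,4) by (intro distinct_prefix_unique_index) auto
  show "\<exists>!c2. c2 < d \<and> f 1 q c2 = j"
    using col assms(3,4) by (intro distinct_prefix_unique_index) auto
qed

lemma sum_if_unique: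
  assumes "finite A" "\<exists>!i. i \<in> A \<and> P i"
  shows "(\<Sum>i\<in>A. if P i then y else 0) = y"
proof -
  obtain i0 where "i0 \<in> A" "\<And>i. i \<in> A \<Longrightarrow> P i \<longleftrightarrow> i = i0"
    using assms(2) by blast
  then have "(\<Sum>i\<in>A. if P i then y else 0) = (\<Sum>i\<in>A. if i = i0 then y else 0)"
    by (intro sum.cong) auto
  then show ?thesis using assms(1) \<open>i0 \<in> A\<close> by simp
qed

lemma sum_ketbra:
  assumes "finite J"
  shows "(\<Sum>j\<in>J. a j * ketbra (p j) j r c) = (if c \<in> J \<and> p c = r then a c else 0)"
proof -
  have "(\<Sum>j\<in>J. a j * ketbra (p j) j r c) = (\<Sum>j\<in>J. if j = c then (if p c = r then a c else 0) else 0)"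
    unfolding ketbra_def by (intro sum.cong) auto
  then show ?thesis using assms by simp
qed

lemma A_hat_entry:
  assumes "r < N" "c < N"
  shows "A_hat N phi chi theta r c = overlap N phi chi r c * exp (- \<i> * complex_of_real (theta c))"
proof -
  have "A_hat N phi chi theta r c =
      (\<Sum>q<N. \<Sum>j<N. overlap N phi chi q j * exp (- \<i> * complex_of_real (theta j)) * ketbra q j r c)"
    unfolding A_hat_def by (rule sum.swap)
  also have "\<dots> = (\<Sum>q<N. if q = r then overlap N phi chi q c * exp (- \<i> * complex_of_real (theta c)) else 0)"
    using assms(2) by (simp add: sum_ketbra[where p = "\<lambda>_. _"] eq_commute[of _ r])
  finally show ?thesis using assms(1) by simp
qed

lemma A_prime_entry:
  assumes pad: "padded_index N d phi chi f" and rc: "r < N" "c < N"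
  shows "A_prime N d B phi chi theta f k r c =
    (if overlap N phi chi r c \<noteq> 0 then (1 / 2 ^ B) * (\<Sum>b<2 ^ B. if b < k c r then 1 else (-1) ^ b)
       * exp (\<i> * complex_of_real (Arg (overlap N phi chi r c)) - \<i> * complex_of_real (theta c)) else 0)"
    (is "_ = (if ?nz then ?X else 0)")
proof -
  have coloured: "c \<in> {j. j < N \<and> in_V0 N phi chi f c1 c2 j} \<and> f 0 c c1 = r \<longleftrightarrow>
      ?nz \<and> f 0 c c1 = r \<and> f 1 r c2 = c" for c1 c2
    using rc by (auto simp: in_V0_def)
  have fin: "finite {j. j < N \<and> in_V0 N phi chi f c1 c2 j}" for c1 c2 by simp
  have "A_prime N d B phi chi theta f k r c =
      (\<Sum>c1<d. \<Sum>c2<d. if ?nz \<and> f 0 c c1 = r \<and> f 1 r c2 = c then ?X else 0)"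
    unfolding A_prime_def sum_ketbra[OF fin] coloured
    by (intro sum.cong refl if_cong) (auto simp: g_fun_def)
  also have "\<dots> = (if ?nz then ?X else 0)"
  proof (cases ?nz)
    case True
    have "(\<Sum>c1<d. \<Sum>c2<d. if ?nz \<and> f 0 c c1 = r \<and> f 1 r c2 = c then ?X else 0)
        = (\<Sum>c1<d. if f 0 c c1 = r then \<Sum>c2<d. if f 1 r c2 = c then ?X else 0 else 0)"
      using True by (intro sum.cong) auto
    also have "\<dots> = ?X"
      using padded_index_unique_colours[OF pad rc True] by (simp add: sum_if_unique)
    finally show ?thesis using True by simp
  qed simp
  finally show ?thesis .
qed

lemma rounded_amplitude_error:
  fixes z :: complex and t :: real
  assumes "0 < B" "K \<le> 2 ^ B" "\<bar>2 ^ B * cmod z - real K\<bar> \<le> 1"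
  shows "cmod ((1 / 2 ^ B) * (\<Sum>b<2 ^ B. if b < K then 1 else (-1) ^ b)
           * exp (\<i> * complex_of_real (Arg z) - \<i> * complex_of_real t) - z * exp (- \<i> * complex_of_real t))
         \<le> 2 / 2 ^ B"
proof -
  define a :: real where "a = (real K - real (K mod 2)) / 2 ^ B"
  define u where "u = exp (\<i> * complex_of_real (Arg z))"
  define w where "w = exp (- \<i> * complex_of_real t)"
  have average: "(1 / 2 ^ B) * (\<Sum>b<2 ^ B. if b < K then 1 else (-1) ^ b) = complex_of_real a"
    using assms(1,2) by (simp add: sum_truncated_alternating a_def of_nat_diff)
  have polar: "complex_of_real (cmod z) * u = z"
    unfolding u_def by (metis rcis_cmod_Arg rcis_def cis_conv_exp)
  have phase: "exp (\<i> * complex_of_real (Arg z) - \<i> * complex_of_real t) = u * w"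
    unfolding u_def w_def by (simp add: exp_add[symmetric])
  have "(1 / 2 ^ B) * (\<Sum>b<2 ^ B. if b < K then 1 else (-1) ^ b)
        * exp (\<i> * complex_of_real (Arg z) - \<i> * complex_of_real t) - z * exp (- \<i> * complex_of_real t)
      = (complex_of_real a * u - z) * w"
    unfolding average phase w_def[symmetric] by (simp add: algebra_simps)
  also have "\<dots> = complex_of_real (a - cmod z) * u * w"
    by (subst (1) polar[symmetric]) (simp add: algebra_simps)
  also have "cmod \<dots> = \<bar>a - cmod z\<bar>"
    unfolding u_def w_def by (simp add: norm_mult del: of_real_diff)
  also have "a - cmod z = (real K - 2 ^ B * cmod z - real (K mod 2)) / 2 ^ B"
    by (simp add: a_def field_simps)
  also have "\<bar>\<dots>\<bar> \<le> 2 / 2 ^ B"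
  proof -
    have "\<bar>real K - 2 ^ B * cmod z - real (K mod 2)\<bar> \<le> 2"
      using assms(3) by (auto simp: abs_le_iff)
    then show ?thesis by (simp add: abs_divide divide_right_mono)
  qed
  finally show ?thesis .
qed

theorem mainTheorem3:
  fixes n d B :: nat
    and chi phi :: "nat \<Rightarrow> nat \<Rightarrow> complex"
    and theta :: "nat \<Rightarrow> real"
    and f :: "nat \<Rightarrow> nat \<Rightarrow> nat \<Rightarrow> nat"
    and k :: "nat \<Rightarrow> nat \<Rightarrow> nat"
  assumes "0 < n" and "0 < d" and "0 < B"
    and "orthonormal_basis (2 ^ n) chi"
    and "orthonormal_basis (2 ^ n) phi"
    and "d_sparse (2 ^ n) d phi chi"
    and "padded_index (2 ^ n) d phi chi f"
    and "\<forall>j < 2 ^ n. \<forall>q < 2 ^ n. k j q \<le> 2 ^ B \<and>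
           \<bar>2 ^ B * cmod (overlap (2 ^ n) phi chi q j) - real (k j q)\<bar> \<le> 1"
  shows "spec_norm (2 ^ n)
           (\<lambda>r c. A_prime (2 ^ n) d B phi chi theta f k r c - A_hat (2 ^ n) phi chi theta r c)
         \<le> 2 * real d ^ 2 / 2 ^ B"
proof -
  let ?N = "2 ^ n :: nat" and ?nz = "\<lambda>r c. overlap (2 ^ n) phi chi r c \<noteq> 0"
  let ?M = "\<lambda>r c. A_prime ?N d B phi chi theta f k r c - A_hat ?N phi chi theta r c"
  have support: "?nz r c" if "r < ?N" "c < ?N" "?M r c \<noteq> 0" for r c
    using that by (auto simp: A_prime_entry[OF assms(7)] A_hat_entry split: if_splits)
  have "spec_norm ?N ?M \<le> 2 / 2 ^ B * real d"
  proof (rule spec_norm_le_sparse[where P = ?nz])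
    fix r c assume rc: "r < ?N" "c < ?N"
    then show "?M r c \<noteq> 0 \<Longrightarrow> ?nz r c" by (rule support)
    show "cmod (?M r c) \<le> 2 / 2 ^ B"
    proof (cases "?nz r c")
      case True
      then show ?thesis
        unfolding A_prime_entry[OF assms(7) rc] A_hat_entry[OF rc] if_P[OF True]
        using assms(8) rc by (intro rounded_amplitude_error[OF assms(3)]) auto
    qed (use support[OF rc] in fastforce)
  qed (use assms(6) in \<open>auto simp: d_sparse_def\<close>)
  also have "\<dots> \<le> 2 * real d ^ 2 / 2 ^ B"
    using assms(2) by (simp add: power2_eq_square divide_right_mono)
  finally show ?thesis .
qed

end
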